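(* Let $k>500$ and $\ln^3k/\sqrt k<\delta<1/100$, let $d=300\lceil\ln k\rceil$ and $\varepsilon=50\delta/\lceil\ln k\rceil$, and let $c^1,\dots,c^k$ be sampled independently and uniformly from the grid $G=\{0,\varepsilon,2\varepsilon,\dots\}^d\cap[0,1]^d$. Then with probability at least $1-1/k^2$, $\|c^i-c^j\|_2\ge\sqrt d/5$ for all $i\ne j$.
   Context: $G$ is the set of points of $[0,1]^d$ all of whose coordinates are nonnegative integer multiples of $\varepsilon$. *)

theory Defs
  imports "HOL-Probability.Probability"
begin

text \<open>Points of [0,1]^d are represented as functions nat => real, with coordinates
  indexed by 0..<d; coordinates outside 0..<d are fixed to 0.\<close>

definition grid :: "nat \<Rightarrow> real \<Rightarrow> (nat \<Rightarrow> real) set" where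
  "grid d \<epsilon> = {x. (\<forall>i<d. (\<exists>n::nat. x i = real n * \<epsilon>) \<and> 0 \<le> x i \<and> x i \<le> 1)
                    \<and> (\<forall>i\<ge>d. x i = 0)}"

definition dist2 :: "nat \<Rightarrow> (nat \<Rightarrow> real) \<Rightarrow> (nat \<Rightarrow> real) \<Rightarrow> real" where
  "dist2 d x y = sqrt (\<Sum>i<d. (x i - y i)^2)"

definition grid_samples :: "nat \<Rightarrow> nat \<Rightarrow> real \<Rightarrow> (nat \<Rightarrow> nat \<Rightarrow> real) pmf" where
  "grid_samples k d \<epsilon> = Pi_pmf {..<k} (\<lambda>_. 0) (\<lambda>_. pmf_of_set (grid d \<epsilon>))"

end

theory Submission
  imports Defs
begin

text \<open>
  By a union bound over the ordered pairs of samples it suffices that two independent uniform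
  grid points are closer than sqrt d / 5 with probability at most k^-4. Their coordinates form
  d independent pairs of uniform grid coordinates, and such a pair differs by at least 2/5 with
  probability at least (29/50)^2, because ln k > 25 forces eps <= 1/50. Two close points have
  fewer than d/4 such coordinates; Markov's inequality for (2/3) raised to the number of far
  coordinates (a Chernoff bound) gives probability at most exp (-d/75) = exp (-4 ceil (ln k)).
\<close>

lemma prod_if_eq_power_card:
  "finite A \<Longrightarrow> (\<Prod>x\<in>A. if P x then c else 1) = c ^ card {x\<in>A. P x}"
  by (simp add: prod.If_cases Int_def)

lemma pair_pmf_of_set:
  assumes "finite A" "A \<noteq> {}" "finite B" "B \<noteq> {}"
  shows "pair_pmf (pmf_of_set A) (pmf_of_set B) = pmf_of_set (A \<times> B)"
  by (intro pmf_eqI, unfold split_paired_all)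
     (simp add: assms pmf_pair card_cartesian_product split: split_indicator)

lemma pair_pmf_Pi_pmf:
  assumes A: "finite A"
  shows "pair_pmf (Pi_pmf A d1 p) (Pi_pmf A d2 q) =
         map_pmf (\<lambda>h. (fst \<circ> h, snd \<circ> h)) (Pi_pmf A (d1, d2) (\<lambda>x. pair_pmf (p x) (q x)))"
    (is "_ = map_pmf ?unzip ?P")
proof (rule pmf_eqI)
  fix z :: "('a \<Rightarrow> 'b) \<times> ('a \<Rightarrow> 'c)"
  obtain f g where z: "z = (f, g)"
    by fastforce
  have "inj ?unzip"
    by (auto intro!: injI simp: fun_eq_iff prod_eq_iff)
  from pmf_map_inj'[OF this, of ?P "\<lambda>x. (f x, g x)"]
  have "pmf (map_pmf ?unzip ?P) z = pmf ?P (\<lambda>x. (f x, g x))"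
    by (simp add: z o_def)
  also have "\<dots> = pmf (Pi_pmf A d1 p) f * pmf (Pi_pmf A d2 q) g"
    using A by (auto simp: pmf_Pi pmf_pair prod.distrib)
  finally show "pmf (pair_pmf (Pi_pmf A d1 p) (Pi_pmf A d2 q)) z = pmf (map_pmf ?unzip ?P) z"
    by (simp add: z pmf_pair)
qed

lemma Pi_pmf_two_components:
  assumes "finite A" "i \<in> A" "j \<in> A" "i \<noteq> j"
  shows "map_pmf (\<lambda>c. (c i, c j)) (Pi_pmf A dflt p) = pair_pmf (p i) (p j)"
proof -
  have "Pi_pmf A dflt p = Pi_pmf (insert i (A - {i})) dflt p"
    using assms by (simp add: insert_absorb)
  also have "\<dots> = map_pmf (\<lambda>(y, f). f(i := y)) (pair_pmf (p i) (Pi_pmf (A - {i}) dflt p))"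
    using assms by (intro Pi_pmf_insert) auto
  finally have "map_pmf (\<lambda>c. (c i, c j)) (Pi_pmf A dflt p) =
      map_pmf (\<lambda>(y, f). (id y, f j)) (pair_pmf (p i) (Pi_pmf (A - {i}) dflt p))"
    using assms(4) by (simp add: pmf.map_comp o_def case_prod_unfold)
  also have "\<dots> = pair_pmf (map_pmf id (p i)) (map_pmf (\<lambda>f. f j) (Pi_pmf (A - {i}) dflt p))"
    by (rule map_pair)
  also have "map_pmf (\<lambda>f. f j) (Pi_pmf (A - {i}) dflt p) = p j"
    using assms by (subst Pi_pmf_component) auto
  finally show ?thesis
    by simp
qed

lemma prob_Pi_pmf_pairwise_ge:
  fixes R :: "'a \<Rightarrow> 'a \<Rightarrow> bool"
  shows "1 - real k ^ 2 * measure_pmf.prob (pair_pmf p p) {z. \<not> R (fst z) (snd z)}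
           \<le> measure_pmf.prob (Pi_pmf {..<k} dflt (\<lambda>_. p))
                {c. \<forall>i<k. \<forall>j<k. i \<noteq> j \<longrightarrow> R (c i) (c j)}"
proof -
  define M where "M = Pi_pmf {..<k} dflt (\<lambda>_. p)"
  define P where "P = {ij \<in> {..<k} \<times> {..<k}. fst ij \<noteq> snd ij}"
  define bad where "bad ij = {c. \<not> R (c (fst ij)) (c (snd ij))}" for ij :: "nat \<times> nat"
  have "card P \<le> card ({..<k} \<times> {..<k})"
    unfolding P_def by (intro card_mono) auto
  then have card_P: "real (card P) \<le> real k ^ 2"
    by (simp add: card_cartesian_product power2_eq_square flip: of_nat_mult)
  have prob_bad:
      "measure_pmf.prob M (bad ij) = measure_pmf.prob (pair_pmf p p) {z. \<not> R (fst z) (snd z)}"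
    if "ij \<in> P" for ij
  proof -
    have "measure_pmf.prob M (bad ij) =
        measure_pmf.prob (map_pmf (\<lambda>c. (c (fst ij), c (snd ij))) M) {z. \<not> R (fst z) (snd z)}"
      by (simp add: bad_def measure_map_pmf vimage_def)
    also have "map_pmf (\<lambda>c. (c (fst ij), c (snd ij))) M = pair_pmf p p"
      using that unfolding M_def P_def by (subst Pi_pmf_two_components) auto
    finally show ?thesis .
  qed
  define good where "good = {c. \<forall>i<k. \<forall>j<k. i \<noteq> j \<longrightarrow> R (c i) (c j)}"
  have "UNIV - good = (\<Union>ij\<in>P. bad ij)"
    by (auto simp: good_def P_def bad_def)
  then have "measure_pmf.prob M (UNIV - good) \<le> (\<Sum>ij\<in>P. measure_pmf.prob M (bad ij))"
    by (simp add: P_def measure_pmf.finite_measure_subadditive_finite)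
  also have "\<dots> = real (card P) * measure_pmf.prob (pair_pmf p p) {z. \<not> R (fst z) (snd z)}"
    by (simp add: prob_bad)
  also have "\<dots> \<le> real k ^ 2 * measure_pmf.prob (pair_pmf p p) {z. \<not> R (fst z) (snd z)}"
    using card_P by (intro mult_right_mono) auto
  finally show ?thesis
    using measure_pmf.prob_compl[of good M] by (simp add: M_def good_def)
qed

lemma expectation_if_mem:
  fixes q :: real
  shows "measure_pmf.expectation p (\<lambda>y. if y \<in> S then q else 1) = 1 - (1 - q) * measure_pmf.prob p S"
proof -
  have "(\<lambda>y. if y \<in> S then q else 1) = (\<lambda>y. 1 - (1 - q) * indicator S y)"
    by (auto simp: fun_eq_iff)
  moreover have "integrable p (indicator S :: _ \<Rightarrow> real)"
    by (rule measure_pmf.integrable_const_bound[where B=1]) auto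
  ultimately show ?thesis
    by (simp add: Bochner_Integration.integral_diff)
qed

lemma prob_Pi_pmf_few_hits_le:
  fixes q r :: real and S :: "'a \<Rightarrow> 'b set"
  assumes A: "finite A" and q: "0 < q" "q \<le> 1"
    and r: "\<And>x. x \<in> A \<Longrightarrow> r \<le> measure_pmf.prob (p x) (S x)"
  shows "measure_pmf.prob (Pi_pmf A dflt p) {h. card {x\<in>A. h x \<in> S x} \<le> m}
           \<le> (1 / q) ^ m * (1 - (1 - q) * r) ^ card A"
proof -
  define w where "w h = (\<Prod>x\<in>A. if h x \<in> S x then q else 1)" for h
  have w_eq: "w h = q ^ card {x\<in>A. h x \<in> S x}" for h
    unfolding w_def using A by (rule prod_if_eq_power_card)
  have indicator_le: "indicator {h. card {x\<in>A. h x \<in> S x} \<le> m} h \<le> (1 / q) ^ m * w h" for h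
  proof (cases "card {x\<in>A. h x \<in> S x} \<le> m")
    case True
    then have "q ^ m \<le> w h"
      unfolding w_eq using q by (intro power_decreasing) auto
    then show ?thesis
      using True q by (simp add: field_simps)
  qed (use q in \<open>simp add: w_eq\<close>)
  have integrable_w: "integrable (measure_pmf (Pi_pmf A dflt p)) w"
    unfolding w_def using A q
    by (intro integrable_prod_Pi_pmf measure_pmf.integrable_const_bound[where B=1]) auto
  have "measure_pmf.prob (Pi_pmf A dflt p) {h. card {x\<in>A. h x \<in> S x} \<le> m}
        = measure_pmf.expectation (Pi_pmf A dflt p) (indicator {h. card {x\<in>A. h x \<in> S x} \<le> m})"
    by simp
  also have "\<dots> \<le> measure_pmf.expectation (Pi_pmf A dflt p) (\<lambda>h. (1 / q) ^ m * w h)"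
    using integrable_w
    by (intro integral_mono indicator_le integrable_mult_right)
       (auto intro: measure_pmf.integrable_const_bound[where B=1])
  also have "\<dots> = (1 / q) ^ m * (\<Prod>x\<in>A. 1 - (1 - q) * measure_pmf.prob (p x) (S x))"
    unfolding w_def using A q
    by (simp only: integral_mult_right_zero,
        subst expectation_prod_Pi_pmf[where f = "\<lambda>x v. if v \<in> S x then q else 1"])
       (auto intro: measure_pmf.integrable_const_bound[where B=1] simp: expectation_if_mem)
  also have "\<dots> \<le> (1 / q) ^ m * (1 - (1 - q) * r) ^ card A"
  proof -
    have "(\<Prod>x\<in>A. 1 - (1 - q) * measure_pmf.prob (p x) (S x)) \<le> (\<Prod>x\<in>A. 1 - (1 - q) * r)"
      using q r by (intro prod_mono) (auto intro!: mult_left_mono mult_le_one measure_pmf.prob_le_1)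
    then show ?thesis
      using q by (simp add: mult_left_mono)
  qed
  finally show ?thesis .
qed

definition grid_coords :: "real \<Rightarrow> real set" where
  "grid_coords \<epsilon> = {r. (\<exists>n::nat. r = real n * \<epsilon>) \<and> 0 \<le> r \<and> r \<le> 1}"

lemma grid_eq_PiE_dflt: "grid d \<epsilon> = PiE_dflt {..<d} 0 (\<lambda>_. grid_coords \<epsilon>)"
  by (auto simp: grid_def grid_coords_def PiE_dflt_def not_less)

lemma grid_coords_eq:
  assumes "0 < \<epsilon>"
  shows "grid_coords \<epsilon> = (\<lambda>n. real n * \<epsilon>) ` {..nat \<lfloor>1 / \<epsilon>\<rfloor>}"
proof -
  have "real n * \<epsilon> \<le> 1 \<longleftrightarrow> n \<le> nat \<lfloor>1 / \<epsilon>\<rfloor>" for n :: nat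
  proof -
    have "real n * \<epsilon> \<le> 1 \<longleftrightarrow> real n \<le> 1 / \<epsilon>"
      using assms by (simp add: field_simps)
    also have "\<dots> \<longleftrightarrow> int n \<le> \<lfloor>1 / \<epsilon>\<rfloor>"
      by (simp add: le_floor_iff)
    also have "\<dots> \<longleftrightarrow> n \<le> nat \<lfloor>1 / \<epsilon>\<rfloor>"
      using assms by (simp add: le_nat_iff)
    finally show ?thesis .
  qed
  then show ?thesis
    using assms by (auto simp: grid_coords_def)
qed

lemma card_grid_coords:
  assumes "0 < \<epsilon>"
  shows "card (grid_coords \<epsilon>) = nat \<lfloor>1 / \<epsilon>\<rfloor> + 1"
proof -
  have "inj_on (\<lambda>n. real n * \<epsilon>) {..nat \<lfloor>1 / \<epsilon>\<rfloor>}"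
    using assms by (auto intro: inj_onI)
  then show ?thesis
    using assms by (simp add: grid_coords_eq card_image)
qed

lemma finite_grid_coords: "0 < \<epsilon> \<Longrightarrow> finite (grid_coords \<epsilon>)"
  by (simp add: grid_coords_eq)

lemma grid_coords_nonempty: "grid_coords \<epsilon> \<noteq> {}"
  by (auto simp: grid_coords_def)

lemma card_far_index_pairs_ge:
  fixes N T :: nat
  shows "(N - T)^2 \<le> card {z \<in> {..<N} \<times> {..<N}. snd z + T \<le> fst z \<or> fst z + T \<le> snd z}"
proof -
  define shift where "shift z = (if snd z \<le> fst z then (fst z + T, snd z) else (fst z, snd z + T))"
    for z :: "nat \<times> nat"
  have "shift ` ({..<N - T} \<times> {..<N - T})
      \<subseteq> {z \<in> {..<N} \<times> {..<N}. snd z + T \<le> fst z \<or> fst z + T \<le> snd z}"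
    by (auto simp: shift_def)
  moreover have "inj_on shift ({..<N - T} \<times> {..<N - T})"
    by (auto simp: inj_on_def shift_def split: if_splits)
  ultimately have "card ({..<N - T} \<times> {..<N - T})
      \<le> card {z \<in> {..<N} \<times> {..<N}. snd z + T \<le> fst z \<or> fst z + T \<le> snd z}"
    by (intro card_inj_on_le) auto
  then show ?thesis
    by (simp add: card_cartesian_product power2_eq_square)
qed

lemma grid_coords_count_bounds:
  fixes \<epsilon> t :: real
  assumes \<epsilon>: "0 < \<epsilon>" and t: "0 \<le> t" "t + \<epsilon> \<le> 1"
  defines "N \<equiv> nat \<lfloor>1 / \<epsilon>\<rfloor> + 1" and "T \<equiv> nat \<lceil>t / \<epsilon>\<rceil>"
  shows "t \<le> real T * \<epsilon>" and "real N * (1 - t - \<epsilon>) \<le> real (N - T)"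
proof -
  have "real N = real_of_int \<lfloor>1 / \<epsilon>\<rfloor> + 1"
    using \<epsilon> by (simp add: N_def)
  then have N_ge: "1 / \<epsilon> \<le> real N"
    using floor_correct[of "1 / \<epsilon>"] by linarith
  have "real T = real_of_int \<lceil>t / \<epsilon>\<rceil>"
    using \<epsilon> t by (simp add: T_def)
  then have T: "t / \<epsilon> \<le> real T" "real T \<le> t / \<epsilon> + 1"
    using ceiling_correct[of "t / \<epsilon>"] by linarith+
  then show "t \<le> real T * \<epsilon>"
    using \<epsilon> by (simp add: field_simps)
  have "t / \<epsilon> + 1 = (t + \<epsilon>) * (1 / \<epsilon>)"
    using \<epsilon> by (simp add: field_simps)
  also have "\<dots> \<le> (t + \<epsilon>) * real N"
    using N_ge \<epsilon> t by (intro mult_left_mono) auto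
  finally have T_le: "real T \<le> (t + \<epsilon>) * real N"
    using T by linarith
  also have "\<dots> \<le> real N"
    using \<epsilon> t by (intro mult_left_le_one_le) auto
  finally have "T \<le> N"
    by simp
  then show "real N * (1 - t - \<epsilon>) \<le> real (N - T)"
    using T_le by (simp add: of_nat_diff algebra_simps)
qed

lemma prob_grid_coords_far_ge:
  assumes \<epsilon>: "0 < \<epsilon>" and t: "0 \<le> t" "t + \<epsilon> \<le> 1"
  shows "(1 - t - \<epsilon>)^2 \<le> measure_pmf.prob
           (pair_pmf (pmf_of_set (grid_coords \<epsilon>)) (pmf_of_set (grid_coords \<epsilon>)))
           {z. t \<le> \<bar>fst z - snd z\<bar>}"
proof -
  define N where "N = nat \<lfloor>1 / \<epsilon>\<rfloor> + 1"
  define T where "T = nat \<lceil>t / \<epsilon>\<rceil>"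
  define g where "g n = real n * \<epsilon>" for n :: nat
  define C where "C = grid_coords \<epsilon>"
  define far where "far = {z :: real \<times> real. t \<le> \<bar>fst z - snd z\<bar>}"
  define far_indices where
    "far_indices = {z \<in> {..<N} \<times> {..<N}. snd z + T \<le> fst z \<or> fst z + T \<le> snd z}"
  have "{..nat \<lfloor>1 / \<epsilon>\<rfloor>} = {..<N}"
    by (auto simp: N_def)
  then have C: "C = g ` {..<N}"
    by (simp add: C_def grid_coords_eq[OF \<epsilon>] g_def[abs_def])
  have card_C: "card C = N" and finite_C: "finite C" and C_nonempty: "C \<noteq> {}"
    using \<epsilon> by (simp_all add: C_def N_def card_grid_coords finite_grid_coords grid_coords_nonempty)
  have T: "t \<le> real T * \<epsilon>" "real N * (1 - t - \<epsilon>) \<le> real (N - T)"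
    unfolding N_def T_def using \<epsilon> t by (rule grid_coords_count_bounds)+
  have "t \<le> \<bar>g a - g b\<bar>" if "b + T \<le> a \<or> a + T \<le> b" for a b
  proof -
    have "real T * \<epsilon> \<le> \<bar>real a - real b\<bar> * \<epsilon>"
      using that \<epsilon> by (intro mult_right_mono) auto
    also have "\<dots> = \<bar>g a - g b\<bar>"
      using \<epsilon> by (simp add: g_def abs_mult flip: left_diff_distrib)
    finally show ?thesis
      using T(1) by linarith
  qed
  then have "map_prod g g ` far_indices \<subseteq> (C \<times> C) \<inter> far"
    by (auto simp: far_indices_def far_def C)
  moreover have "inj_on (map_prod g g) far_indices"
    using \<epsilon> by (auto simp: inj_on_def g_def)
  ultimately have "card far_indices \<le> card ((C \<times> C) \<inter> far)"
    using finite_C by (intro card_inj_on_le) auto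
  then have "real (N - T)^2 \<le> real (card ((C \<times> C) \<inter> far))"
    using card_far_index_pairs_ge[of N T] unfolding far_indices_def by (simp flip: of_nat_power)
  moreover have "(real N * (1 - t - \<epsilon>))^2 \<le> real (N - T)^2"
    using T(2) t by (intro power_mono) auto
  ultimately have "(real N * (1 - t - \<epsilon>))^2 \<le> real (card ((C \<times> C) \<inter> far))"
    by linarith
  then have "(1 - t - \<epsilon>)^2 \<le> real (card ((C \<times> C) \<inter> far)) / real N^2"
    by (simp add: N_def power_mult_distrib le_divide_eq mult.commute)
  also have "\<dots> = measure_pmf.prob (pmf_of_set (C \<times> C)) far"
    using finite_C C_nonempty
    by (simp add: measure_pmf_of_set card_cartesian_product card_C power2_eq_square)
  also have "pmf_of_set (C \<times> C) = pair_pmf (pmf_of_set C) (pmf_of_set C)"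
    by (intro pair_pmf_of_set[symmetric] finite_C C_nonempty)
  finally show ?thesis
    unfolding C_def far_def .
qed

lemma card_far_coords_lt:
  assumes "dist2 d x y < sqrt (real d) / 5"
  shows "4 * card {b\<in>{..<d}. 2/5 \<le> \<bar>x b - y b\<bar>} < d"
proof -
  define B where "B = {b\<in>{..<d}. 2/5 \<le> \<bar>x b - y b\<bar>}"
  have "(\<Sum>b\<in>B. (2/5::real)^2) \<le> (\<Sum>b\<in>B. (x b - y b)^2)"
  proof (rule sum_mono)
    fix b
    assume "b \<in> B"
    then have "(2/5)^2 \<le> \<bar>x b - y b\<bar>^2"
      by (intro power_mono) (auto simp: B_def)
    then show "(2/5::real)^2 \<le> (x b - y b)^2"
      by simp
  qed
  also have "\<dots> \<le> (\<Sum>b<d. (x b - y b)^2)"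
    by (intro sum_mono2) (auto simp: B_def)
  also have "\<dots> < real d / 25"
  proof -
    have "sqrt (\<Sum>b<d. (x b - y b)^2) < sqrt (real d) / 5"
      using assms by (simp add: dist2_def)
    then have "sqrt (\<Sum>b<d. (x b - y b)^2) ^ 2 < (sqrt (real d) / 5) ^ 2"
      by (intro power_strict_mono) (auto intro: sum_nonneg)
    then show ?thesis
      by (simp add: power_divide sum_nonneg)
  qed
  finally have "real (4 * card B) < real d"
    by (simp add: power2_eq_square)
  then show ?thesis
    unfolding B_def by (simp only: of_nat_less_iff)
qed

lemma prob_grid_pair_close_le:
  fixes m :: nat and \<epsilon> :: real
  assumes \<epsilon>: "0 < \<epsilon>" "\<epsilon> \<le> 1/50"
  defines "d \<equiv> 4 * m"
  shows "measure_pmf.prob (pair_pmf (pmf_of_set (grid d \<epsilon>)) (pmf_of_set (grid d \<epsilon>)))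
           {z. dist2 d (fst z) (snd z) < sqrt (real d) / 5} \<le> exp (- 4 * real m / 75)"
proof -
  define U where "U = pmf_of_set (grid_coords \<epsilon>)"
  define far where "far = {z :: real \<times> real. 2/5 \<le> \<bar>fst z - snd z\<bar>}"
  define unzip where "unzip h = (fst \<circ> h, snd \<circ> h)" for h :: "nat \<Rightarrow> real \<times> real"
  have "pmf_of_set (grid d \<epsilon>) = Pi_pmf {..<d} 0 (\<lambda>_. U)"
    unfolding U_def grid_eq_PiE_dflt using \<epsilon>
    by (intro Pi_pmf_of_set[symmetric]) (simp_all add: finite_grid_coords grid_coords_nonempty)
  then have pair_eq: "pair_pmf (pmf_of_set (grid d \<epsilon>)) (pmf_of_set (grid d \<epsilon>)) =
      map_pmf unzip (Pi_pmf {..<d} (0, 0) (\<lambda>_. pair_pmf U U))"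
    by (simp add: pair_pmf_Pi_pmf unzip_def[abs_def])
  have "measure_pmf.prob (pair_pmf (pmf_of_set (grid d \<epsilon>)) (pmf_of_set (grid d \<epsilon>)))
           {z. dist2 d (fst z) (snd z) < sqrt (real d) / 5}
      \<le> measure_pmf.prob (Pi_pmf {..<d} (0, 0) (\<lambda>_. pair_pmf U U))
           {h. card {b\<in>{..<d}. h b \<in> far} \<le> m}"
    unfolding pair_eq measure_map_pmf
  proof (intro measure_pmf.finite_measure_mono subsetI)
    fix h
    assume "h \<in> unzip -` {z. dist2 d (fst z) (snd z) < sqrt (real d) / 5}"
    then have "4 * card {b\<in>{..<d}. 2/5 \<le> \<bar>(fst \<circ> h) b - (snd \<circ> h) b\<bar>} < 4 * m"
      unfolding d_def by (intro card_far_coords_lt) (simp add: unzip_def o_def)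
    then show "h \<in> {h. card {b\<in>{..<d}. h b \<in> far} \<le> m}"
      by (simp add: far_def)
  qed simp
  also have "\<dots> \<le> (1 / (2/3)) ^ m * (1 - (1 - 2/3) * (29/50)^2) ^ card {..<d}"
  proof (rule prob_Pi_pmf_few_hits_le)
    have "(29/50::real)^2 \<le> (1 - 2/5 - \<epsilon>)^2"
      using \<epsilon> by (intro power_mono) auto
    also have "\<dots> \<le> measure_pmf.prob (pair_pmf U U) far"
      unfolding U_def far_def using \<epsilon> by (intro prob_grid_coords_far_ge) auto
    finally show "(29/50)^2 \<le> measure_pmf.prob (pair_pmf U U) far" .
  qed auto
  also have "\<dots> = (1 / (2/3) * (1 - (1 - 2/3) * (29/50)^2) ^ 4) ^ m"
    by (simp only: d_def card_lessThan power_mult power_mult_distrib)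
  also have "\<dots> \<le> exp (- 4 / 75) ^ m"
  proof (rule power_mono)
    have "1 / (2/3) * (1 - (1 - 2/3) * (29/50)^2) ^ 4 \<le> 1 + (- 4 / 75 :: real)"
      by (simp add: power_numeral_reduce)
    also have "\<dots> \<le> exp (- 4 / 75)"
      by (rule exp_ge_add_one_self)
    finally show "1 / (2/3) * (1 - (1 - 2/3) * (29/50)^2) ^ 4 \<le> exp (- 4 / 75 :: real)" .
  qed simp
  also have "\<dots> = exp (- 4 * real m / 75)"
    by (simp flip: exp_of_nat_mult)
  finally show ?thesis .
qed

lemma ln_gt_25:
  fixes x :: real
  assumes "500 < x" and "ln x ^ 3 / sqrt x < 1/100"
  shows "25 < ln x"
proof -
  have "100 * ln x ^ 3 < sqrt x"
    using assms by (simp add: field_simps)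
  moreover have "0 < ln x"
    using assms(1) by simp
  ultimately have "(100 * ln x ^ 3)^2 < sqrt x ^ 2"
    by (intro power_strict_mono) auto
  then have x_gt: "10000 * ln x ^ 6 < x"
    using assms(1) by (simp add: power_mult_distrib flip: power_mult)
  have exp_le: "exp (real c) \<le> 3 ^ c" for c :: nat
  proof -
    have "exp (real c) = exp 1 ^ c"
      using exp_of_nat_mult[of c 1] by simp
    also have "\<dots> \<le> 3 ^ c"
      by (intro power_mono exp_le) auto
    finally show ?thesis .
  qed
  have less_ln_if: "real c < ln x" if "3 ^ c < x" for c :: nat
  proof -
    have "exp (real c) < exp (ln x)"
      using exp_le[of c] that assms(1) by simp
    then show ?thesis
      by simp
  qed
  have bootstrap: "real c < ln x" if "a \<le> ln x" "0 \<le> a" "3 ^ c \<le> 10000 * a ^ 6"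
    for a :: real and c :: nat
  proof (rule less_ln_if)
    have "a ^ 6 \<le> ln x ^ 6"
      using that by (intro power_mono) auto
    then show "3 ^ c < x"
      using that x_gt by linarith
  qed
  have "real 5 < ln x"
    using assms(1) by (intro less_ln_if) simp
  then have "real 17 < ln x"
    by (intro bootstrap[of 5]) auto
  then have "real 23 < ln x"
    by (intro bootstrap[of 17]) auto
  then have "real 25 < ln x"
    by (intro bootstrap[of 23]) auto
  then show ?thesis
    by simp
qed

theorem lemma8:
  fixes k :: nat and \<delta> :: real
  assumes "k > 500"
    and "ln (real k) ^ 3 / sqrt (real k) < \<delta>" and "\<delta> < 1/100"
  defines "d \<equiv> 300 * nat \<lceil>ln (real k)\<rceil>"
    and "\<epsilon> \<equiv> 50 * \<delta> / real_of_int \<lceil>ln (real k)\<rceil>"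
  shows "measure_pmf.prob (grid_samples k d \<epsilon>)
           {c. \<forall>i<k. \<forall>j<k. i \<noteq> j \<longrightarrow> dist2 d (c i) (c j) \<ge> sqrt (real d) / 5}
         \<ge> 1 - 1 / (real k)^2"
proof -
  define n where "n = nat \<lceil>ln (real k)\<rceil>"
  have ln_k: "25 < ln (real k)"
    using assms(1-3) by (intro ln_gt_25) linarith+
  then have n: "real_of_int \<lceil>ln (real k)\<rceil> = real n" "ln (real k) \<le> real n" "25 \<le> real n"
    unfolding n_def by linarith+
  have "0 < ln (real k) ^ 3 / sqrt (real k)"
    using ln_k assms(1) by simp
  then have "0 < \<epsilon>" "\<epsilon> \<le> 1/50"
    using assms(2,3) n by (auto simp: \<epsilon>_def field_simps)
  define G where "G = pmf_of_set (grid d \<epsilon>)"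
  define close where "close = {z. \<not> sqrt (real d) / 5 \<le> dist2 d (fst z) (snd z)}"
  have "measure_pmf.prob (pair_pmf G G) close \<le> exp (- 4 * real n)"
    using prob_grid_pair_close_le[of \<epsilon> "75 * n"] \<open>0 < \<epsilon>\<close> \<open>\<epsilon> \<le> 1/50\<close>
    by (simp add: G_def close_def d_def n_def not_le)
  also have "\<dots> \<le> exp (- 4 * ln (real k))"
    using n by simp
  also have "\<dots> = 1 / real k ^ 4"
    using assms(1) exp_of_nat_mult[of 4 "ln (real k)"] by (simp add: exp_minus inverse_eq_divide)
  finally have "real k ^ 2 * measure_pmf.prob (pair_pmf G G) close \<le> 1 / real k ^ 2"
    using assms(1) by (simp add: field_simps)
  then show ?thesis
    using prob_Pi_pmf_pairwise_ge[where k = k and p = G and dflt = "\<lambda>_. 0"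
        and R = "\<lambda>x y. sqrt (real d) / 5 \<le> dist2 d x y"]
    unfolding grid_samples_def G_def close_def by linarith
qed

end
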